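(* Let $P$ be a finite partial IP loop. Then $\#\Gamma(P)\equiv(\#P-1)(\#P-2)-o_3(P)\pmod 6$.
   Context: A partial IP loop is a set $P$ with a partial binary operation $(x,y)\mapsto xy$ defined on a subset $D(P)\subseteq P\times P$ (the domain) such that: (1) there is $1\in P$ with $(1,x),(x,1)\in D(P)$ and $1x=x1=x$ for all $x\in P$; (2) for each $x\in P$ there is a unique $y\in P$, denoted $x^{-1}$, with $(x,y),(y,x)\in D(P)$ and $xy=yx=1$; (3) whenever $(x,y)\in D(P)$, we have $(x^{-1},xy),(xy,y^{-1})\in D(P)$ and $x^{-1}(xy)=y$, $(xy)y^{-1}=x$. The set of gaps is $\Gamma(P)=(P\times P)\setminus D(P)$. $O_3(P)=\{x\in P: (x,x)\in D(P),\ (x,xx)\in D(P),\ x\neq 1,\ x(xx)=1\}$ and $o_3(P)=\#O_3(P)$; $\#A$ denotes the cardinality of a finite set $A$. *)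

theory Defs
  imports "HOL-Number_Theory.Cong"
begin

text \<open>A partial IP loop: carrier P, domain D \<subseteq> P \<times> P, multiplication m (meaningful on D), unit e.\<close>

definition pinv :: "'a set \<Rightarrow> ('a \<times> 'a) set \<Rightarrow> ('a \<Rightarrow> 'a \<Rightarrow> 'a) \<Rightarrow> 'a \<Rightarrow> 'a \<Rightarrow> 'a" where
  "pinv P D m e x = (THE y. y \<in> P \<and> (x, y) \<in> D \<and> (y, x) \<in> D \<and> m x y = e \<and> m y x = e)"

definition partial_IP_loop :: "'a set \<Rightarrow> ('a \<times> 'a) set \<Rightarrow> ('a \<Rightarrow> 'a \<Rightarrow> 'a) \<Rightarrow> 'a \<Rightarrow> bool" where
  "partial_IP_loop P D m e \<longleftrightarrow>
     D \<subseteq> P \<times> P \<and>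
     (\<forall>(x, y) \<in> D. m x y \<in> P) \<and>
     e \<in> P \<and>
     (\<forall>x \<in> P. (e, x) \<in> D \<and> (x, e) \<in> D \<and> m e x = x \<and> m x e = x) \<and>
     (\<forall>x \<in> P. \<exists>!y. y \<in> P \<and> (x, y) \<in> D \<and> (y, x) \<in> D \<and> m x y = e \<and> m y x = e) \<and>
     (\<forall>(x, y) \<in> D.
        (pinv P D m e x, m x y) \<in> D \<and> (m x y, pinv P D m e y) \<in> D \<and>
        m (pinv P D m e x) (m x y) = y \<and> m (m x y) (pinv P D m e y) = x)"

definition gaps :: "'a set \<Rightarrow> ('a \<times> 'a) set \<Rightarrow> ('a \<times> 'a) set" where
  "gaps P D = (P \<times> P) - D"

definition O3 :: "'a set \<Rightarrow> ('a \<times> 'a) set \<Rightarrow> ('a \<Rightarrow> 'a \<Rightarrow> 'a) \<Rightarrow> 'a \<Rightarrow> 'a set" where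
  "O3 P D m e = {x \<in> P. (x, x) \<in> D \<and> (x, m x x) \<in> D \<and> x \<noteq> e \<and> m x (m x x) = e}"

definition o3 :: "'a set \<Rightarrow> ('a \<times> 'a) set \<Rightarrow> ('a \<Rightarrow> 'a \<Rightarrow> 'a) \<Rightarrow> 'a \<Rightarrow> nat" where
  "o3 P D m e = card (O3 P D m e)"

end

theory Submission
  imports Defs
begin

text \<open>
  The inverse property makes \<sigma>(x, y) = (xy, y\<inverse>) and \<rho>(x, y) = (y, (xy)\<inverse>) permutations
  of the domain D with \<sigma>^2 = \<rho>^3 = id (they permute the triangles x, y, (xy)\<inverse> of product 1).
  If f^p = id on a finite set with p prime, every orbit that is not a fixed point has exactly
  p elements, so the set and its fixed points have the same size modulo p. The fixed points
  of \<sigma> are the pairs (x, 1), those of \<rho> the pairs (x, x) with x = 1 or x \<in> O3; hence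
  #D \<equiv> #P (mod 2) and #D \<equiv> o3 + 1 (mod 3). Inversion is a fixed point free involution
  on O3, so o3 is even, and #\<Gamma> = #P^2 - #D gives the congruence modulo 6.
\<close>

lemma funpow_mod_period:
  assumes "(f ^^ n) x = x"
  shows "(f ^^ (k mod n)) x = (f ^^ k) x"
proof -
  have multiple: "(f ^^ (n * q)) x = x" for q
    by (induction q) (simp_all add: funpow_add assms)
  have "(f ^^ k) x = (f ^^ (k mod n + n * (k div n))) x"
    by (simp only: mod_mult_div_eq)
  also have "\<dots> = (f ^^ (k mod n)) ((f ^^ (n * (k div n))) x)"
    by (simp only: funpow_add comp_apply)
  also have "\<dots> = (f ^^ (k mod n)) x"
    by (simp add: multiple)
  finally show ?thesis
    by (rule sym)
qed

lemma funpow_gcd_period: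
  fixes a b :: nat
  assumes "(f ^^ a) x = x" and "(f ^^ b) x = x"
  shows "(f ^^ gcd a b) x = x"
  using assms
proof (induction a b rule: gcd_nat_induct)
  case (step a b)
  then have "(f ^^ (a mod b)) x = x"
    by (simp add: funpow_mod_period)
  with step show ?case
    by (simp add: gcd_non_0_nat)
qed simp

lemma funpow_prime_period_fixed:
  assumes "prime p" and "(f ^^ p) x = x" and "(f ^^ d) x = x" and "0 < d" and "d < p"
  shows "f x = x"
proof -
  have "coprime d p"
    using assms by (metis coprime_commute nat_dvd_not_less prime_imp_coprime_nat)
  then show ?thesis
    using funpow_gcd_period[OF assms(3,2)] by simp
qed

lemma inj_on_funpow_prime_period:
  assumes "prime p" and "(f ^^ p) x = x" and "f x \<noteq> x"
  shows "inj_on (\<lambda>i. (f ^^ i) x) {..<p}"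
proof (rule linorder_inj_onI')
  fix i j assume "i \<in> {..<p}" and "j \<in> {..<p}" and "i < j"
  show "(f ^^ i) x \<noteq> (f ^^ j) x"
  proof
    assume eq: "(f ^^ i) x = (f ^^ j) x"
    have "(f ^^ (p - j + i)) x = (f ^^ (p - j)) ((f ^^ j) x)"
      using eq by (simp add: funpow_add)
    also have "\<dots> = (f ^^ (p - j + j)) x"
      by (simp add: funpow_add)
    also have "\<dots> = x"
      using \<open>j \<in> {..<p}\<close> assms(2) by simp
    finally have "(f ^^ (p - j + i)) x = x" .
    moreover have "0 < p - j + i" and "p - j + i < p"
      using \<open>i < j\<close> \<open>j \<in> {..<p}\<close> by auto
    ultimately have "f x = x"
      by (rule funpow_prime_period_fixed[OF assms(1,2)])
    with assms(3) show False
      by simp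
  qed
qed

lemma funpow_iterate_not_fixed:
  assumes "(f ^^ p) x = x" and "f x \<noteq> x" and "i < p"
  shows "f ((f ^^ i) x) \<noteq> (f ^^ i) x"
proof
  assume fixed: "f ((f ^^ i) x) = (f ^^ i) x"
  then have stays: "(f ^^ k) ((f ^^ i) x) = (f ^^ i) x" for k
    by (induction k) simp_all
  have "x = (f ^^ (p - i + i)) x"
    using assms(1,3) by simp
  also have "\<dots> = (f ^^ i) x"
    by (simp add: funpow_add stays)
  finally show False
    using fixed assms(2) by simp
qed

lemma funpow_period_preimage:
  assumes "0 < p" and "(f ^^ p) x = x" and "(f ^^ p) y = y" and "f y = (f ^^ i) x"
  shows "y = (f ^^ ((p - 1 + i) mod p)) x"
proof -
  have "y = (f ^^ Suc (p - 1)) y"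
    using assms(1,3) by simp
  also have "\<dots> = (f ^^ (p - 1)) (f y)"
    by (simp only: funpow_Suc_right comp_apply)
  also have "\<dots> = (f ^^ (p - 1 + i)) x"
    by (simp add: assms(4) funpow_add)
  also have "\<dots> = (f ^^ ((p - 1 + i) mod p)) x"
    by (simp add: funpow_mod_period[OF assms(2)])
  finally show ?thesis .
qed

lemma card_fixpoints_cong_mod_prime:
  assumes "finite A" and "prime p"
    and "\<And>x. x \<in> A \<Longrightarrow> f x \<in> A" and "\<And>x. x \<in> A \<Longrightarrow> (f ^^ p) x = x"
  shows "[card A = card {x \<in> A. f x = x}] (mod p)"
  using assms(1,3,4)
proof (induction A rule: finite_psubset_induct)
  case (psubset A)
  show ?case
  proof (cases "\<forall>x \<in> A. f x = x")
    case True
    then have "{x \<in> A. f x = x} = A" by auto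
    then show ?thesis by simp
  next
    case False
    then obtain x where "x \<in> A" and "f x \<noteq> x" by auto
    have "0 < p" and period: "(f ^^ p) x = x"
      using prime_gt_0_nat[OF assms(2)] psubset.prems(2)[OF \<open>x \<in> A\<close>] by auto
    define orb where "orb = (\<lambda>i. (f ^^ i) x) ` {..<p}"
    have "(f ^^ i) x \<in> A" for i
      by (induction i) (simp_all add: psubset.prems(1) \<open>x \<in> A\<close>)
    then have "orb \<subseteq> A"
      unfolding orb_def by auto
    have "x \<in> orb"
      unfolding orb_def using \<open>0 < p\<close> by force
    have "card orb = p"
      unfolding orb_def
      by (simp add: card_image inj_on_funpow_prime_period[OF assms(2) period \<open>f x \<noteq> x\<close>])
    have "y \<in> orb" if "y \<in> A" and "f y \<in> orb" for y
      using that funpow_period_preimage[OF \<open>0 < p\<close> period psubset.prems(2)[OF \<open>y \<in> A\<close>]]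
      unfolding orb_def by (auto intro!: imageI)
    then have "[card (A - orb) = card {y \<in> A - orb. f y = y}] (mod p)"
      using \<open>x \<in> orb\<close> \<open>x \<in> A\<close> psubset.prems by (intro psubset.IH) auto
    moreover have "{y \<in> A - orb. f y = y} = {y \<in> A. f y = y}"
      using funpow_iterate_not_fixed[OF period \<open>f x \<noteq> x\<close>] unfolding orb_def by auto
    moreover have "card A = card (A - orb) + p"
      using card_Diff_subset[OF _ \<open>orb \<subseteq> A\<close>] card_mono[OF psubset.hyps(1) \<open>orb \<subseteq> A\<close>]
        finite_subset[OF \<open>orb \<subseteq> A\<close> psubset.hyps(1)] \<open>card orb = p\<close> by simp
    ultimately show ?thesis
      unfolding cong_def by simp
  qed
qed

context
  fixes P :: "'a set" and D :: "('a \<times> 'a) set" and m :: "'a \<Rightarrow> 'a \<Rightarrow> 'a" and e :: 'a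
  assumes loop: "partial_IP_loop P D m e"
begin

abbreviation loop_inv :: "'a \<Rightarrow> 'a" where
  "loop_inv \<equiv> pinv P D m e"

lemma loop_domain_subset: "D \<subseteq> P \<times> P"
  using loop by (auto simp: partial_IP_loop_def)

lemma loop_mult_closed: "(x, y) \<in> D \<Longrightarrow> m x y \<in> P"
  using loop by (auto simp: partial_IP_loop_def)

lemma loop_unit_closed: "e \<in> P"
  using loop by (auto simp: partial_IP_loop_def)

lemma loop_unit_mult: "x \<in> P \<Longrightarrow> (e, x) \<in> D \<and> (x, e) \<in> D \<and> m e x = x \<and> m x e = x"
  using loop by (auto simp: partial_IP_loop_def)

lemma loop_ex1_inverse:
  "x \<in> P \<Longrightarrow> \<exists>!y. y \<in> P \<and> (x, y) \<in> D \<and> (y, x) \<in> D \<and> m x y = e \<and> m y x = e"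
  using loop by (auto simp: partial_IP_loop_def)

lemma loop_inverse:
  assumes "x \<in> P"
  shows "loop_inv x \<in> P \<and> (x, loop_inv x) \<in> D \<and> (loop_inv x, x) \<in> D \<and>
    m x (loop_inv x) = e \<and> m (loop_inv x) x = e"
  unfolding pinv_def by (rule theI', rule loop_ex1_inverse[OF assms])

lemma loop_inverse_unique:
  assumes "x \<in> P" "y \<in> P" "(x, y) \<in> D" "(y, x) \<in> D" "m x y = e" "m y x = e"
  shows "loop_inv x = y"
  unfolding pinv_def by (rule the1_equality, rule loop_ex1_inverse) (use assms in auto)

lemma loop_inv_inv: "x \<in> P \<Longrightarrow> loop_inv (loop_inv x) = x"
  using loop_inverse loop_inverse_unique[of "loop_inv x" x] by simp

lemma loop_inv_unit: "loop_inv e = e"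
  using loop_inverse_unique[of e e] loop_unit_closed loop_unit_mult[of e] by simp

lemma loop_inverse_property:
  assumes "(x, y) \<in> D"
  shows "(loop_inv x, m x y) \<in> D \<and> (m x y, loop_inv y) \<in> D \<and>
    m (loop_inv x) (m x y) = y \<and> m (m x y) (loop_inv y) = x"
  using loop assms by (auto simp: partial_IP_loop_def)

lemma loop_rotate_product:
  assumes "(x, y) \<in> D"
  shows "(y, loop_inv (m x y)) \<in> D \<and> m y (loop_inv (m x y)) = loop_inv x"
proof -
  have "(loop_inv x, m x y) \<in> D" and "m (loop_inv x) (m x y) = y"
    using loop_inverse_property[OF assms] by auto
  then show ?thesis
    using loop_inverse_property[of "loop_inv x" "m x y"] by auto
qed

lemma O3_eq: "O3 P D m e = {x \<in> P. x \<noteq> e \<and> (x, x) \<in> D \<and> m x x = loop_inv x}"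
proof (intro set_eqI iffI)
  fix x assume "x \<in> O3 P D m e"
  then have "x \<in> P" and "(x, x) \<in> D" and "x \<noteq> e" and "(x, m x x) \<in> D" and "m x (m x x) = e"
    unfolding O3_def by auto
  then have "m x x = m (loop_inv x) e"
    using loop_inverse_property[of x "m x x"] by auto
  also have "\<dots> = loop_inv x"
    using loop_unit_mult loop_inverse[OF \<open>x \<in> P\<close>] by simp
  finally show "x \<in> {x \<in> P. x \<noteq> e \<and> (x, x) \<in> D \<and> m x x = loop_inv x}"
    using \<open>x \<in> P\<close> \<open>(x, x) \<in> D\<close> \<open>x \<noteq> e\<close> by simp
qed (use loop_inverse in \<open>auto simp: O3_def\<close>)

definition reflect_pair :: "'a \<times> 'a \<Rightarrow> 'a \<times> 'a" where
  "reflect_pair = (\<lambda>(x, y). (m x y, loop_inv y))"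

definition rotate_pair :: "'a \<times> 'a \<Rightarrow> 'a \<times> 'a" where
  "rotate_pair = (\<lambda>(x, y). (y, loop_inv (m x y)))"

lemma reflect_pair_in_domain: "q \<in> D \<Longrightarrow> reflect_pair q \<in> D"
  by (cases q) (simp add: reflect_pair_def loop_inverse_property)

lemma reflect_pair_reflect_pair:
  assumes "q \<in> D"
  shows "reflect_pair (reflect_pair q) = q"
proof -
  obtain x y where q: "q = (x, y)" and xy: "(x, y) \<in> D"
    using assms by (cases q) auto
  then have "y \<in> P"
    using loop_domain_subset by auto
  then show ?thesis
    by (simp add: q reflect_pair_def loop_inverse_property[OF xy] loop_inv_inv)
qed

lemma reflect_pair_fixpoints: "{q \<in> D. reflect_pair q = q} = (\<lambda>x. (x, e)) ` P"
proof (intro set_eqI iffI)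
  fix q assume fixed: "q \<in> {q \<in> D. reflect_pair q = q}"
  obtain x y where q: "q = (x, y)"
    by (cases q)
  have "(x, y) \<in> D" and "m x y = x"
    using fixed by (auto simp: q reflect_pair_def)
  then have "y = m (loop_inv x) x"
    using loop_inverse_property[OF \<open>(x, y) \<in> D\<close>] by simp
  moreover have "x \<in> P"
    using \<open>(x, y) \<in> D\<close> loop_domain_subset by auto
  ultimately show "q \<in> (\<lambda>x. (x, e)) ` P"
    using q loop_inverse by auto
next
  fix q assume "q \<in> (\<lambda>x. (x, e)) ` P"
  then obtain x where "x \<in> P" and "q = (x, e)"
    by auto
  then show "q \<in> {q \<in> D. reflect_pair q = q}"
    by (simp add: reflect_pair_def loop_unit_mult loop_inv_unit)
qed

lemma rotate_pair_in_domain: "q \<in> D \<Longrightarrow> rotate_pair q \<in> D"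
  by (cases q) (simp add: rotate_pair_def loop_rotate_product)

lemma rotate_pair_period:
  assumes "q \<in> D"
  shows "(rotate_pair ^^ 3) q = q"
proof -
  obtain x y where q: "q = (x, y)" and xy: "(x, y) \<in> D"
    using assms by (cases q) auto
  define z where "z = loop_inv (m x y)"
  have yz: "(y, z) \<in> D" and "m y z = loop_inv x"
    using loop_rotate_product[OF xy] by (auto simp: z_def)
  moreover have "x \<in> P" and "y \<in> P"
    using xy loop_domain_subset by auto
  ultimately have "m z x = loop_inv y"
    using loop_rotate_product[OF yz] loop_inv_inv by auto
  then show ?thesis
    using \<open>m y z = loop_inv x\<close> \<open>x \<in> P\<close> \<open>y \<in> P\<close> loop_inv_inv
    by (simp add: q rotate_pair_def z_def[symmetric] numeral_3_eq_3)
qed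

lemma rotate_pair_fixpoints:
  "{q \<in> D. rotate_pair q = q} = (\<lambda>x. (x, x)) ` insert e (O3 P D m e)"
proof (intro set_eqI iffI)
  fix q assume fixed: "q \<in> {q \<in> D. rotate_pair q = q}"
  obtain x y where "q = (x, y)"
    by (cases q)
  then have q: "q = (x, x)" and "(x, x) \<in> D" and "loop_inv (m x x) = x"
    using fixed by (auto simp: rotate_pair_def)
  then have "m x x = loop_inv x"
    using loop_inv_inv loop_mult_closed by metis
  then show "q \<in> (\<lambda>x. (x, x)) ` insert e (O3 P D m e)"
    using q \<open>(x, x) \<in> D\<close> loop_domain_subset by (auto simp: O3_eq)
next
  fix q assume "q \<in> (\<lambda>x. (x, x)) ` insert e (O3 P D m e)"
  then obtain x where q: "q = (x, x)" and "x = e \<or> x \<in> O3 P D m e"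
    by auto
  from this(2) show "q \<in> {q \<in> D. rotate_pair q = q}"
  proof
    assume "x = e"
    then show ?thesis
      using loop_unit_closed by (simp add: q rotate_pair_def loop_unit_mult loop_inv_unit)
  next
    assume "x \<in> O3 P D m e"
    then have "x \<in> P" and "(x, x) \<in> D" and "m x x = loop_inv x"
      by (simp_all add: O3_eq)
    then show ?thesis
      by (simp add: q rotate_pair_def loop_inv_inv)
  qed
qed

lemma loop_inv_in_O3:
  assumes "x \<in> O3 P D m e"
  shows "loop_inv x \<in> O3 P D m e"
proof -
  have "x \<in> P" and "x \<noteq> e" and "(x, x) \<in> D" and sq: "m x x = loop_inv x"
    using assms by (auto simp: O3_eq)
  have "loop_inv x \<noteq> e"
    using \<open>x \<noteq> e\<close> loop_inv_inv[OF \<open>x \<in> P\<close>] loop_inv_unit by metis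
  moreover have "(loop_inv x, loop_inv x) \<in> D" and "m (loop_inv x) (loop_inv x) = x"
    using loop_inverse_property[OF \<open>(x, x) \<in> D\<close>] sq by auto
  ultimately show ?thesis
    using loop_inverse[OF \<open>x \<in> P\<close>] loop_inv_inv[OF \<open>x \<in> P\<close>] by (simp add: O3_eq)
qed

lemma loop_inv_O3_neq:
  assumes "x \<in> O3 P D m e"
  shows "loop_inv x \<noteq> x"
proof
  assume "loop_inv x = x"
  have "x \<in> P" and "x \<noteq> e" and "(x, x) \<in> D" and "m x x = loop_inv x"
    using assms by (auto simp: O3_eq)
  then have "x = m (loop_inv x) x"
    using loop_inverse_property[OF \<open>(x, x) \<in> D\<close>] \<open>loop_inv x = x\<close> by simp
  also have "\<dots> = e"
    using loop_inverse[OF \<open>x \<in> P\<close>] by simp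
  finally show False
    using \<open>x \<noteq> e\<close> by simp
qed

context
  assumes "finite P"
begin

lemma finite_loop_domain: "finite D"
  using finite_subset[OF loop_domain_subset] \<open>finite P\<close> by simp

lemma card_loop_domain_cong_mod2: "[card D = card P] (mod 2)"
proof -
  have "[card D = card {q \<in> D. reflect_pair q = q}] (mod 2)"
    by (rule card_fixpoints_cong_mod_prime[OF finite_loop_domain two_is_prime_nat])
      (simp_all add: reflect_pair_in_domain reflect_pair_reflect_pair numeral_2_eq_2)
  moreover have "card {q \<in> D. reflect_pair q = q} = card P"
    unfolding reflect_pair_fixpoints by (rule card_image) (auto simp: inj_on_def)
  ultimately show ?thesis by simp
qed

lemma card_loop_domain_cong_mod3: "[card D = o3 P D m e + 1] (mod 3)"
proof -
  have "[card D = card {q \<in> D. rotate_pair q = q}] (mod 3)"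
    by (rule card_fixpoints_cong_mod_prime[OF finite_loop_domain])
      (simp_all add: rotate_pair_in_domain rotate_pair_period)
  moreover have "finite (O3 P D m e)" and "e \<notin> O3 P D m e"
    using \<open>finite P\<close> by (auto simp: O3_def)
  then have "card {q \<in> D. rotate_pair q = q} = o3 P D m e + 1"
    unfolding rotate_pair_fixpoints o3_def by (subst card_image) (auto simp: inj_on_def)
  ultimately show ?thesis by simp
qed

lemma even_o3: "even (o3 P D m e)"
proof -
  have "[card (O3 P D m e) = card {x \<in> O3 P D m e. loop_inv x = x}] (mod 2)"
  proof (rule card_fixpoints_cong_mod_prime[OF _ two_is_prime_nat])
    show "finite (O3 P D m e)"
      using \<open>finite P\<close> by (simp add: O3_def)
    fix x assume "x \<in> O3 P D m e"
    then show "loop_inv x \<in> O3 P D m e"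
      by (rule loop_inv_in_O3)
    show "(loop_inv ^^ 2) x = x"
      using \<open>x \<in> O3 P D m e\<close> by (simp add: O3_eq loop_inv_inv numeral_2_eq_2)
  qed
  moreover have "{x \<in> O3 P D m e. loop_inv x = x} = {}"
    using loop_inv_O3_neq by blast
  ultimately show ?thesis
    by (simp add: o3_def cong_0_iff)
qed

end

end

lemma card_gaps:
  assumes "D \<subseteq> P \<times> P" and "finite P"
  shows "int (card (gaps P D)) = int (card P) * int (card P) - int (card D)"
proof -
  have "card D \<le> card (P \<times> P)"
    by (rule card_mono) (use assms in auto)
  then show ?thesis
    using assms by (simp add: gaps_def card_Diff_subset finite_subset card_cartesian_product of_nat_diff)
qed

lemma cong_6_square_minus:
  fixes n d k :: int
  assumes "[d = n] (mod 2)" and "[d = k + 1] (mod 3)" and "even k"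
  shows "[n * n - d = (n - 1) * (n - 2) - k] (mod 6)"
proof -
  have "n * n - d - ((n - 1) * (n - 2) - k) = 3 * n - 2 - d + k"
    by algebra
  moreover have "2 dvd (d - n)" and "3 dvd (d - (k + 1))"
    using assms(1,2) by (simp_all add: cong_iff_dvd_diff)
  ultimately show ?thesis
    using assms(3) unfolding cong_iff_dvd_diff by presburger
qed

theorem lemma2:
  fixes P :: "'a set" and D :: "('a \<times> 'a) set" and m :: "'a \<Rightarrow> 'a \<Rightarrow> 'a" and e :: 'a
  assumes "partial_IP_loop P D m e" and "finite P"
  shows "[int (card (gaps P D)) = (int (card P) - 1) * (int (card P) - 2) - int (o3 P D m e)] (mod 6)"
proof -
  have "[int (card D) = int (card P)] (mod 2)"
    using card_loop_domain_cong_mod2[OF assms] cong_int_iff[of "card D" "card P" 2] by simp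
  moreover have "[int (card D) = int (o3 P D m e) + 1] (mod 3)"
    using card_loop_domain_cong_mod3[OF assms] cong_int_iff[of "card D" "o3 P D m e + 1" 3]
    by (simp add: add.commute)
  moreover have "even (int (o3 P D m e))"
    using even_o3[OF assms] by simp
  ultimately have "[int (card P) * int (card P) - int (card D) =
      (int (card P) - 1) * (int (card P) - 2) - int (o3 P D m e)] (mod 6)"
    by (rule cong_6_square_minus)
  then show ?thesis
    using card_gaps[OF loop_domain_subset[OF assms(1)] assms(2)] by simp
qed

end
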